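(* Let $\mathcal{G}\leq\mathrm{Homeo}(M)$ be locally approximating, and let $U,V\in\mathcal{D}_{\mathcal{G}}$. Then $U$ is compactly contained in $V$ if and only if there exists a nonempty $W\in\mathcal{D}_{\mathcal{G}}$ with $W\subseteq V$ such that for every nonempty $\hat W\in\mathcal{D}_{\mathcal{G}}$ with $\hat W\subseteq W$, there is $g\in\mathcal{G}[V]$ with $g(U)\subseteq\hat W$.
   Context: $M$ is a compact, connected topological manifold of positive dimension, possibly with boundary; $\mathrm{Homeo}(M)$ has the compact-open topology; $\mathcal{G}[U]$ is the subgroup of elements of $\mathcal{G}$ acting as the identity on $M\setminus U$. $\mathcal{G}$ is locally approximating if: (1) for every open $U$ with compact closure in a single Euclidean chart and not accumulating on $\partial M$, $\mathcal{G}[U]$ is dense in $\mathrm{Homeo}(M)[U]$; and (2) if $\partial M\neq\emptyset$, either (a) $\mathcal{G}$ consists of compactly supported homeomorphisms of $M\setminus\partial M$, or (b) for every open $U$ with compact closure in a single Euclidean chart, $\mathcal{G}[U]$ is dense in $\mathrm{Homeo}(M)[U]$. The extended support $\mathrm{supp}^e g$ of a homeomorphism $g$ is the interior of the closure of $\{x: g(x)\neq x\}$; $\mathcal{D}_{\mathcal{G}}=\{\mathrm{supp}^e g: g\in\mathcal{G}\}$, a collection of regular open sets (open sets equal to the interior of their closure). A collared ball in $M$ (of dimension $n$) is the image of an embedding of the closed unit ball $B(1)\subset\mathbb{R}^n$ that extends to an embedding of the radius-$2$ ball. $U$ is said to be compactly contained in $V$ if $U$ is contained in a collared ball which is contained in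 the interior of $V$. *)

theory Defs
  imports "HOL-Analysis.Analysis"
begin

text \<open>Model space: the closed half-space of the Euclidean space 'n (dimension DIM('n) \<ge> 1).
  The manifold M is the whole (Hausdorff) type 'a.\<close>

definition hs_vec :: "'n::euclidean_space" where
  "hs_vec = (SOME b. b \<in> Basis)"

definition half_space :: "'n::euclidean_space set" where
  "half_space = {x. 0 \<le> x \<bullet> hs_vec}"

definition chart :: "'a::topological_space set \<Rightarrow> ('a \<Rightarrow> 'n::euclidean_space) \<Rightarrow> bool" where
  "chart C \<phi> \<longleftrightarrow> open C \<and> openin (top_of_set half_space) (\<phi> ` C) \<and>
     (\<exists>\<psi>. homeomorphism C (\<phi> ` C) \<phi> \<psi>)"

definition is_manifold :: "'n::euclidean_space itself \<Rightarrow> 'a::t2_space itself \<Rightarrow> bool" where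
  "is_manifold _ _ \<longleftrightarrow> (\<forall>x::'a. \<exists>C (\<phi>::'a \<Rightarrow> 'n). chart C \<phi> \<and> x \<in> C)"

definition mbdry :: "'n::euclidean_space itself \<Rightarrow> 'a::topological_space set" where
  "mbdry _ = {x. \<exists>C (\<phi>::'a \<Rightarrow> 'n). chart C \<phi> \<and> x \<in> C \<and> \<phi> x \<bullet> hs_vec = 0}"

definition chart_domain :: "'n::euclidean_space itself \<Rightarrow> 'a::topological_space set \<Rightarrow> bool" where
  "chart_domain _ C \<longleftrightarrow> (\<exists>\<phi>::'a \<Rightarrow> 'n. chart C \<phi>)"

definition homeos :: "('a::topological_space \<Rightarrow> 'a) set" where
  "homeos = {f. \<exists>g. homeomorphism UNIV UNIV f g}"

definition is_subgroup_homeo :: "('a::topological_space \<Rightarrow> 'a) set \<Rightarrow> bool" where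
  "is_subgroup_homeo G \<longleftrightarrow> G \<subseteq> homeos \<and> id \<in> G \<and>
     (\<forall>f\<in>G. \<forall>g\<in>G. f \<circ> g \<in> G) \<and> (\<forall>f\<in>G. inv f \<in> G)"

text \<open>G[U]: elements of G acting as the identity on M - U.\<close>
definition rel_supp :: "('a \<Rightarrow> 'a) set \<Rightarrow> 'a set \<Rightarrow> ('a \<Rightarrow> 'a) set" where
  "rel_supp G U = {g \<in> G. \<forall>x. x \<notin> U \<longrightarrow> g x = x}"

definition compact_open :: "('a::topological_space \<Rightarrow> 'a) topology" where
  "compact_open = topology_generated_by {{f. f ` K \<subseteq> Q} | K Q. compact K \<and> open Q}"

definition dense_in_homeo :: "('a::topological_space \<Rightarrow> 'a) set \<Rightarrow> 'a set \<Rightarrow> bool" where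
  "dense_in_homeo G U \<longleftrightarrow>
     rel_supp homeos U \<subseteq> (subtopology compact_open (rel_supp homeos U)) closure_of (rel_supp G U)"

definition locally_approximating :: "'n::euclidean_space itself \<Rightarrow> ('a::topological_space \<Rightarrow> 'a) set \<Rightarrow> bool" where
  "locally_approximating (N::'n itself) (G::('a \<Rightarrow> 'a) set) \<longleftrightarrow>
    (\<forall>U::'a set. open U \<and> compact (closure U) \<and> (\<exists>C::'a set. chart_domain N C \<and> closure U \<subseteq> C)
          \<and> closure U \<inter> mbdry N = {} \<longrightarrow> dense_in_homeo G U) \<and>
    (mbdry N \<noteq> ({}::'a set) \<longrightarrow>
      ((\<forall>g\<in>G. \<exists>K::'a set. compact K \<and> K \<inter> mbdry N = {} \<and> (\<forall>x. x \<notin> K \<longrightarrow> g x = x)) \<or>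
       (\<forall>U::'a set. open U \<and> compact (closure U) \<and> (\<exists>C::'a set. chart_domain N C \<and> closure U \<subseteq> C)
          \<longrightarrow> dense_in_homeo G U)))"

definition ext_supp :: "('a::topological_space \<Rightarrow> 'a) \<Rightarrow> 'a set" where
  "ext_supp g = interior (closure {x. g x \<noteq> x})"

definition D_of :: "('a::topological_space \<Rightarrow> 'a) set \<Rightarrow> 'a set set" where
  "D_of G = ext_supp ` G"

definition collared_ball :: "'n::euclidean_space itself \<Rightarrow> 'a::topological_space set \<Rightarrow> bool" where
  "collared_ball _ B \<longleftrightarrow> (\<exists>(e::'n \<Rightarrow> 'a) e'. homeomorphism (cball 0 2) (e ` cball 0 2) e e'
        \<and> B = e ` cball 0 1)"

definition compactly_contained :: "'n::euclidean_space itself \<Rightarrow> 'a::topological_space set \<Rightarrow> 'a set \<Rightarrow> bool" where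
  "compactly_contained N U V \<longleftrightarrow> (\<exists>B. collared_ball N B \<and> U \<subseteq> B \<and> B \<subseteq> interior V)"

end

theory Submission
  imports Defs
begin

text \<open>
  A collared ball B = e(cball 0 1) inside V extends to e(cball 0 R) \<subseteq> V for some R > 1.
  Pushing forward radial shrinkings and point-moving homeomorphisms of the model ball along e
  gives homeomorphisms supported in e(ball 0 R) that squeeze B into any open set meeting it,
  and local approximation replaces them by elements of G[V].  So if W is the (nonempty)
  extended support of an element of G supported in B, then for every nonempty W' \<subseteq> W some
  element of G[V] maps U \<subseteq> B into W'.
  Conversely, put a collared ball e(cball 0 1) into W and an extended support W' of G inside it;
  if g \<in> G[V] maps U into W', then U lies in the collared ball g\<inverse>(e(cball 0 1)), which stays
  in V because g fixes the complement of V.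
\<close>

section \<open>Homeomorphisms of a closed ball\<close>

lemma radial_map_image_cball:
  fixes c :: "real \<Rightarrow> real"
  assumes cont: "continuous_on UNIV c" and pos: "\<And>t. 0 < c t"
    and strict_mono: "\<And>s t. 0 \<le> s \<Longrightarrow> s < t \<Longrightarrow> s * c s < t * c t"
    and fixed: "c s = 1" and "0 \<le> s"
  shows "(\<lambda>v. c (norm v) *\<^sub>R v) ` cball (0::'n::real_normed_vector) s = cball 0 s"
proof
  show "(\<lambda>v. c (norm v) *\<^sub>R v) ` cball (0::'n) s \<subseteq> cball 0 s"
  proof (rule image_subsetI)
    fix v :: 'n assume "v \<in> cball 0 s"
    then have "norm v * c (norm v) \<le> s * c s"
      using strict_mono[of "norm v" s] by (cases "norm v = s") auto
    then show "c (norm v) *\<^sub>R v \<in> cball 0 s" using fixed pos[of "norm v"] by (simp add: mult.commute)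
  qed
  show "cball (0::'n) s \<subseteq> (\<lambda>v. c (norm v) *\<^sub>R v) ` cball 0 s"
  proof
    fix y :: 'n assume y: "y \<in> cball 0 s"
    show "y \<in> (\<lambda>v. c (norm v) *\<^sub>R v) ` cball 0 s"
    proof (cases "y = 0")
      case True
      then show ?thesis using \<open>0 \<le> s\<close> by (intro image_eqI[of _ _ 0]) auto
    next
      case False
      have "continuous_on {0..s} (\<lambda>t. t * c t)"
        by (intro continuous_intros continuous_on_subset[OF cont]) auto
      then obtain t where t: "0 \<le> t" "t \<le> s" "t * c t = norm y"
        using IVT'[of "\<lambda>t. t * c t" 0 "norm y" s] y fixed \<open>0 \<le> s\<close> by fastforce
      define v where "v = (t / norm y) *\<^sub>R y"
      have "norm v = t" unfolding v_def using False t by simp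
      moreover have "c t *\<^sub>R v = ((t * c t) / norm y) *\<^sub>R y"
        unfolding v_def by (simp add: ac_simps)
      ultimately show ?thesis using t False by (intro image_eqI[of _ _ v]) auto
    qed
  qed
qed

lemma radial_homeomorphism_cball:
  fixes c :: "real \<Rightarrow> real"
  assumes cont: "continuous_on UNIV c" and pos: "\<And>t. 0 < c t"
    and strict_mono: "\<And>s t. 0 \<le> s \<Longrightarrow> s < t \<Longrightarrow> s * c s < t * c t"
    and fixed: "c s = 1" and "0 \<le> s"
  obtains h' where
    "homeomorphism (cball (0::'n::euclidean_space) s) (cball 0 s) (\<lambda>v. c (norm v) *\<^sub>R v) h'"
proof -
  have continuous: "continuous_on (cball 0 s) (\<lambda>v::'n. c (norm v) *\<^sub>R v)"
    by (intro continuous_intros continuous_on_compose2[OF cont]) auto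
  have injective: "inj_on (\<lambda>v::'n. c (norm v) *\<^sub>R v) (cball 0 s)"
  proof (rule inj_onI)
    fix v w :: 'n assume eq: "c (norm v) *\<^sub>R v = c (norm w) *\<^sub>R w"
    then have "norm v * c (norm v) = norm w * c (norm w)"
      using pos[of "norm v"] pos[of "norm w"] by (metis abs_of_pos mult.commute norm_scaleR)
    then have "norm v = norm w"
      using strict_mono[of "norm v" "norm w"] strict_mono[of "norm w" "norm v"]
      by (metis linorder_neqE norm_ge_zero order_less_irrefl)
    then show "v = w" using eq pos[of "norm v"] by simp
  qed
  show thesis
    using homeomorphism_compact[OF compact_cball continuous radial_map_image_cball[OF assms] injective]
      that by blast
qed

definition shrink_factor :: "real \<Rightarrow> real \<Rightarrow> real \<Rightarrow> real \<Rightarrow> real" where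
  "shrink_factor k a r t = min 1 (max k (k + (1 - k) * (t - a) / (r - a)))"

context
  fixes k a r :: real
  assumes k: "0 < k" "k < 1" and "a < r"
begin

lemma continuous_on_shrink_factor: "continuous_on UNIV (shrink_factor k a r)"
  unfolding shrink_factor_def using \<open>a < r\<close> by (intro continuous_intros) auto

lemma shrink_factor_bounds: "k \<le> shrink_factor k a r t" "shrink_factor k a r t \<le> 1"
  unfolding shrink_factor_def using k by auto

lemma shrink_factor_mono: "t \<le> u \<Longrightarrow> shrink_factor k a r t \<le> shrink_factor k a r u"
  unfolding shrink_factor_def using k \<open>a < r\<close>
  by (intro min.mono max.mono add_left_mono divide_right_mono mult_left_mono) auto

lemma shrink_factor_inner: "t \<le> a \<Longrightarrow> shrink_factor k a r t = k"
proof -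
  assume "t \<le> a"
  then have "(1 - k) * (t - a) / (r - a) \<le> 0"
    using k \<open>a < r\<close> by (intro divide_nonpos_pos mult_nonneg_nonpos) auto
  then show ?thesis unfolding shrink_factor_def using k by auto
qed

lemma shrink_factor_outer: "r \<le> t \<Longrightarrow> shrink_factor k a r t = 1"
proof -
  assume "r \<le> t"
  then have "(1 - k) * (r - a) / (r - a) \<le> (1 - k) * (t - a) / (r - a)"
    using k \<open>a < r\<close> by (intro divide_right_mono mult_left_mono) auto
  then show ?thesis unfolding shrink_factor_def using k \<open>a < r\<close> by auto
qed

end

lemma homeomorphism_cball_shrinking:
  assumes "0 < a" "a < r" "r \<le> s" "0 < \<epsilon>" "\<epsilon> < a"
  obtains h h' where "homeomorphism (cball (0::'n::euclidean_space) s) (cball 0 s) h h'"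
    "\<And>v. r \<le> norm v \<Longrightarrow> h v = v" "h ` cball 0 a \<subseteq> cball 0 \<epsilon>"
proof -
  define k where "k = \<epsilon> / a"
  have k: "0 < k" "k < 1" using assms unfolding k_def by auto
  let ?c = "shrink_factor k a r"
  note c_bounds = shrink_factor_bounds[OF k \<open>a < r\<close>]
  have "0 < ?c t" for t using c_bounds(1) k(1) by (rule less_le_trans[rotated])
  moreover have "t * ?c t < u * ?c u" if "0 \<le> t" "t < u" for t u
  proof -
    have "t * ?c t \<le> t * ?c u"
      using that shrink_factor_mono[OF k \<open>a < r\<close>] by (intro mult_left_mono) auto
    also have "\<dots> < u * ?c u" using that c_bounds(1)[of u] k by (intro mult_strict_right_mono) auto
    finally show ?thesis .
  qed
  moreover have "?c s = 1" "0 \<le> s" using shrink_factor_outer[OF k \<open>a < r\<close>] assms by auto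
  ultimately obtain h' where
    "homeomorphism (cball (0::'n) s) (cball 0 s) (\<lambda>v. ?c (norm v) *\<^sub>R v) h'"
    using radial_homeomorphism_cball[OF continuous_on_shrink_factor[OF k \<open>a < r\<close>]] by blast
  moreover have "(\<lambda>v. ?c (norm v) *\<^sub>R v) ` cball 0 a \<subseteq> cball (0::'n) \<epsilon>"
  proof (rule image_subsetI)
    fix v :: 'n assume "v \<in> cball 0 a"
    then have "k * norm v \<le> \<epsilon>" using k assms unfolding k_def by (simp add: field_simps)
    then show "?c (norm v) *\<^sub>R v \<in> cball 0 \<epsilon>"
      using shrink_factor_inner[OF k \<open>a < r\<close>] \<open>v \<in> cball 0 a\<close> k by simp
  qed
  ultimately show thesis using that shrink_factor_outer[OF k \<open>a < r\<close>] by simp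
qed

lemma homeomorphism_cball_moving_origin:
  fixes p :: "'n::euclidean_space"
  assumes "norm p < r" "r \<le> s"
  obtains f f' where "homeomorphism (cball 0 s) (cball 0 s) f f'"
    "\<And>v. v \<in> cball 0 s \<Longrightarrow> r \<le> norm v \<Longrightarrow> f v = v" "f 0 = p"
proof -
  have "0 < r" using assms norm_ge_zero[of p] by linarith
  have hull: "affine hull ball (0::'n) r = UNIV" using \<open>0 < r\<close> by (simp add: affine_hull_open)
  obtain f f' where "homeomorphism (cball 0 s) (cball 0 s) f f'" "f 0 = p"
    "{x. \<not> (f x = x \<and> f' x = x)} \<subseteq> ball 0 r"
    by (rule homeomorphism_moving_point[of "ball 0 r" "cball 0 s" 0 p]) (use assms \<open>0 < r\<close> hull in auto)
  then show thesis using that by fastforce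
qed

lemma cball_subset_open_imp_larger_cball_subset:
  fixes S :: "'n::euclidean_space set"
  assumes "open S" "cball 0 a \<subseteq> S" "0 < a"
  obtains R where "a < R" "cball 0 R \<subseteq> S"
proof -
  obtain \<epsilon> where \<epsilon>: "\<epsilon> > 0" "(\<Union>x\<in>cball 0 a. ball x \<epsilon>) \<subseteq> S"
    using compact_subset_open_imp_ball_epsilon_subset[OF compact_cball assms(1,2)] by blast
  define R where "R = a + \<epsilon> / 2"
  have "cball (0::'n) R \<subseteq> (\<Union>x\<in>cball 0 a. ball x \<epsilon>)"
  proof
    fix v :: 'n assume v: "v \<in> cball 0 R"
    \<comment> \<open>the radial projection of v onto cball 0 a is \<epsilon>-close to v\<close>
    define x where "x = (a / R) *\<^sub>R v"
    have R: "0 < R" "a < R" unfolding R_def using \<epsilon> assms by auto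
    have "norm x \<le> a" unfolding x_def using v R assms by (simp add: field_simps)
    have "v - x = (1 - a / R) *\<^sub>R v" unfolding x_def by (simp add: algebra_simps)
    then have "norm (v - x) = (1 - a / R) * norm v" using R by simp
    also have "\<dots> \<le> (1 - a / R) * R" using v R by (intro mult_left_mono) auto
    also have "\<dots> = R - a" using R by (simp add: field_simps)
    also have "\<dots> < \<epsilon>" unfolding R_def using \<epsilon> by simp
    finally have "v \<in> ball x \<epsilon>" by (simp add: dist_norm norm_minus_commute)
    with \<open>norm x \<le> a\<close> show "v \<in> (\<Union>x\<in>cball (0::'n) a. ball x \<epsilon>)" by auto
  qed
  moreover have "a < R" unfolding R_def using \<epsilon> by simp
  ultimately show thesis using that \<epsilon>(2) by blast
qed

section \<open>Euclidean balls in the manifold\<close>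

lemma hs_vec_in_Basis: "(hs_vec::'n::euclidean_space) \<in> Basis"
  unfolding hs_vec_def by (rule someI_ex) (use nonempty_Basis in blast)

lemma norm_hs_vec [simp]: "norm (hs_vec::'n::euclidean_space) = 1"
  using hs_vec_in_Basis by (rule norm_Basis)

lemma inner_hs_vec_self [simp]: "(hs_vec::'n::euclidean_space) \<bullet> hs_vec = 1"
  by (simp add: inner_Basis hs_vec_in_Basis)

lemma chart_embedding_nbhd:
  fixes e :: "'n::euclidean_space \<Rightarrow> 'a::topological_space" and \<phi> :: "'a \<Rightarrow> 'n"
  assumes "chart C \<phi>" and S: "open S" "continuous_on S e" "inj_on e S"
    and "v \<in> S" "e v \<in> C"
  obtains T where "open T" "\<phi> (e v) \<in> T" "T \<subseteq> \<phi> ` C" "open (C \<inter> \<phi> -` T)" "C \<inter> \<phi> -` T \<subseteq> e ` S"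
proof -
  from \<open>chart C \<phi>\<close> obtain \<psi> where C: "open C" and hom: "homeomorphism C (\<phi> ` C) \<phi> \<psi>"
    unfolding chart_def by blast
  have cont_\<phi>: "continuous_on C \<phi>" using hom by (rule homeomorphism_cont1)
  have inj_\<phi>: "inj_on \<phi> C" using hom by (metis homeomorphism_apply1 inj_on_inverseI)
  define S' where "S' = e -` C \<inter> S"
  have "continuous_on S' (\<phi> \<circ> e)"
    by (rule continuous_on_compose)
      (auto intro: continuous_on_subset[OF S(2)] continuous_on_subset[OF cont_\<phi>] simp: S'_def)
  moreover have "open S'" unfolding S'_def using S C continuous_on_open_vimage by blast
  moreover have "inj_on (\<phi> \<circ> e) S'"
    using S(3) inj_\<phi> unfolding S'_def inj_on_def by auto
  \<comment> \<open>invariance of domain, read in the chart\<close>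
  ultimately have "open ((\<phi> \<circ> e) ` S')" by (rule invariance_of_domain)
  moreover have "open (C \<inter> \<phi> -` ((\<phi> \<circ> e) ` S'))"
    using cont_\<phi> C calculation continuous_on_open_vimage by (metis Int_commute)
  moreover have "C \<inter> \<phi> -` ((\<phi> \<circ> e) ` S') \<subseteq> e ` S"
  proof
    fix x assume x: "x \<in> C \<inter> \<phi> -` ((\<phi> \<circ> e) ` S')"
    then obtain w where w: "w \<in> S'" "\<phi> x = \<phi> (e w)" by auto
    then have "x = e w" using inj_\<phi> x unfolding S'_def inj_on_def by auto
    then show "x \<in> e ` S" using w unfolding S'_def by auto
  qed
  moreover have "\<phi> (e v) \<in> (\<phi> \<circ> e) ` S'" "(\<phi> \<circ> e) ` S' \<subseteq> \<phi> ` C"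
    using assms(5,6) unfolding S'_def by auto
  ultimately show thesis using that by blast
qed

lemma open_embedding_image:
  fixes e :: "'n::euclidean_space \<Rightarrow> 'a::t2_space"
  assumes "is_manifold TYPE('n) TYPE('a)" "open S" "continuous_on S e" "inj_on e S"
  shows "open (e ` S)"
proof (subst open_subopen, intro ballI)
  fix x assume "x \<in> e ` S"
  then obtain v where v: "v \<in> S" "x = e v" by auto
  obtain C and \<phi> :: "'a \<Rightarrow> 'n" where chart: "chart C \<phi>" "x \<in> C"
    using assms(1) unfolding is_manifold_def by blast
  obtain T where "open (C \<inter> \<phi> -` T)" "\<phi> (e v) \<in> T" "C \<inter> \<phi> -` T \<subseteq> e ` S"
    using chart_embedding_nbhd[OF chart(1) assms(2-4) v(1)] chart v by metis
  then show "\<exists>T. open T \<and> x \<in> T \<and> T \<subseteq> e ` S"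
    using chart v by (intro exI[of _ "C \<inter> \<phi> -` T"]) auto
qed

lemma embedding_image_Int_mbdry:
  fixes e :: "'n::euclidean_space \<Rightarrow> 'a::t2_space"
  assumes "open S" "continuous_on S e" "inj_on e S"
  shows "e ` S \<inter> mbdry TYPE('n) = {}"
proof (rule ccontr)
  assume "e ` S \<inter> mbdry TYPE('n) \<noteq> {}"
  then obtain v C and \<phi> :: "'a \<Rightarrow> 'n" where v: "v \<in> S" and chart: "chart C \<phi>" "e v \<in> C"
    and boundary: "\<phi> (e v) \<bullet> hs_vec = 0"
    unfolding mbdry_def by blast
  obtain T where T: "open T" "\<phi> (e v) \<in> T" "T \<subseteq> \<phi> ` C"
    using chart_embedding_nbhd[OF chart(1) assms v chart(2)] by metis
  have "\<phi> ` C \<subseteq> half_space" using chart(1) unfolding chart_def by (meson openin_imp_subset)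
  obtain d where d: "d > 0" "ball (\<phi> (e v)) d \<subseteq> T" using T open_contains_ball by blast
  \<comment> \<open>a point of the chart image just below the boundary hyperplane\<close>
  define y where "y = \<phi> (e v) - (d/2) *\<^sub>R hs_vec"
  have "y \<in> ball (\<phi> (e v)) d" using d unfolding y_def by (simp add: dist_norm)
  then have "y \<in> half_space" using d T \<open>\<phi> ` C \<subseteq> half_space\<close> by blast
  moreover have "y \<bullet> hs_vec < 0" using d boundary unfolding y_def by (simp add: inner_diff_left)
  ultimately show False unfolding half_space_def by auto
qed

lemma openin_half_space_cball_subset:
  assumes "openin (top_of_set half_space) T" "y \<in> T"
  obtains c :: "'n::euclidean_space" and r where "0 < r" "cball c r \<subseteq> T"
proof -
  obtain S where S: "open S" "T = half_space \<inter> S" using assms(1) unfolding openin_open by blast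
  obtain \<delta> where \<delta>: "0 < \<delta>" "ball y \<delta> \<subseteq> S" using S assms(2) open_contains_ball by blast
  \<comment> \<open>push the centre into the interior of the half-space\<close>
  define c where "c = y + (\<delta> / 2) *\<^sub>R hs_vec"
  have "cball c (\<delta> / 4) \<subseteq> T"
  proof
    fix z assume "z \<in> cball c (\<delta> / 4)"
    then have z: "norm (z - c) \<le> \<delta> / 4" by (simp add: dist_norm norm_minus_commute)
    have "norm (z - y) \<le> norm (z - c) + norm (c - y)"
      using norm_triangle_ineq[of "z - c" "c - y"] by simp
    also have "norm (c - y) = \<delta> / 2" unfolding c_def using \<delta>(1) by simp
    finally have "z \<in> ball y \<delta>" using z \<delta>(1) by (simp add: dist_norm norm_minus_commute)
    moreover have "\<bar>(z - c) \<bullet> hs_vec\<bar> \<le> \<delta> / 4"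
      using Cauchy_Schwarz_ineq2[of "z - c" hs_vec] z by simp
    then have "- (\<delta> / 4) \<le> (z - c) \<bullet> hs_vec" by (simp add: abs_le_iff)
    then have "z \<bullet> hs_vec \<ge> y \<bullet> hs_vec"
      unfolding c_def using \<delta>(1) by (simp add: inner_diff_left inner_add_left)
    then have "z \<in> half_space" using assms(2) S(2) unfolding half_space_def by auto
    ultimately show "z \<in> T" using \<delta>(2) S(2) by blast
  qed
  moreover have "0 < \<delta> / 4" using \<delta>(1) by simp
  ultimately show thesis using that by blast
qed

section \<open>Approximation and extended supports\<close>

lemma openin_compact_open:
  assumes "compact K" "open Q"
  shows "openin compact_open {f. f ` K \<subseteq> Q}"
  unfolding compact_open_def openin_topology_generated_by_iff
  by (rule generate_topology_on.Basis) (use assms in blast)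

lemma dense_in_homeo_approx:
  assumes "dense_in_homeo G U" "H \<in> rel_supp homeos U"
    and "compact K" "open Q" "H ` K \<subseteq> Q"
  obtains g where "g \<in> rel_supp G U" "g ` K \<subseteq> Q"
proof -
  let ?X = "subtopology compact_open (rel_supp homeos U)"
  have "H \<in> ?X closure_of rel_supp G U"
    using assms(1,2) unfolding dense_in_homeo_def by blast
  moreover have "openin ?X ({f. f ` K \<subseteq> Q} \<inter> rel_supp homeos U)"
    using openin_compact_open[OF assms(3,4)] by (auto simp: openin_subtopology)
  moreover have "H \<in> {f. f ` K \<subseteq> Q} \<inter> rel_supp homeos U" using assms(2,5) by simp
  ultimately obtain g where "g \<in> rel_supp G U" "g \<in> {f. f ` K \<subseteq> Q} \<inter> rel_supp homeos U"
    unfolding in_closure_of by meson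
  then show thesis using that by blast
qed

lemma rel_supp_mono: "U \<subseteq> V \<Longrightarrow> rel_supp G U \<subseteq> rel_supp G V"
  unfolding rel_supp_def by blast

lemma continuous_on_homeos: "g \<in> homeos \<Longrightarrow> continuous_on UNIV g"
  unfolding homeos_def using homeomorphism_cont1 by blast

lemma open_ext_supp: "open (ext_supp g)"
  unfolding ext_supp_def by simp

lemma moved_points_subset_ext_supp:
  fixes g :: "'a::t2_space \<Rightarrow> 'a"
  assumes "continuous_on UNIV g"
  shows "{x. g x \<noteq> x} \<subseteq> ext_supp g"
proof -
  have "open {x. g x \<noteq> id x}" by (rule open_Collect_neq[OF assms continuous_on_id'])
  then show ?thesis
    unfolding ext_supp_def by (intro interior_maximal closure_subset) simp
qed

lemma ext_supp_subset_closed: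
  assumes "closed F" "\<And>x. x \<notin> F \<Longrightarrow> g x = x"
  shows "ext_supp g \<subseteq> F"
proof -
  have "closure {x. g x \<noteq> x} \<subseteq> F" using assms by (intro closure_minimal) auto
  then show ?thesis unfolding ext_supp_def using interior_subset by blast
qed

section \<open>Collared embeddings\<close>

locale collared_embedding =
  fixes e :: "'n::euclidean_space \<Rightarrow> 'a::t2_space" and e' :: "'a \<Rightarrow> 'n"
  assumes manifold: "is_manifold TYPE('n) TYPE('a)"
    and homeomorphism_onto_image: "homeomorphism (cball 0 2) (e ` cball 0 2) e e'"
begin

lemma inverse_apply [simp]: "v \<in> cball 0 2 \<Longrightarrow> e' (e v) = v"
  using homeomorphism_onto_image by (rule homeomorphism_apply1)

lemma continuous_on_cball: "continuous_on (cball 0 2) e"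
  using homeomorphism_onto_image by (rule homeomorphism_cont1)

lemma continuous_on_ball: "continuous_on (ball 0 2) e"
  using continuous_on_cball ball_subset_cball by (rule continuous_on_subset)

lemma inj_on_cball: "inj_on e (cball 0 2)"
  by (rule inj_on_inverseI[where g = e']) simp

lemma open_image_ball: "r \<le> 2 \<Longrightarrow> open (e ` ball 0 r)"
  by (rule open_embedding_image[OF manifold open_ball])
    (auto intro: continuous_on_subset[OF continuous_on_cball] inj_on_subset[OF inj_on_cball])

lemma image_ball_Int_mbdry: "r \<le> 2 \<Longrightarrow> e ` ball 0 r \<inter> mbdry TYPE('n) = {}"
  by (rule embedding_image_Int_mbdry[OF open_ball])
    (auto intro: continuous_on_subset[OF continuous_on_cball] inj_on_subset[OF inj_on_cball])

lemma compact_image_cball: "r \<le> 2 \<Longrightarrow> compact (e ` cball 0 r)"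
  by (rule compact_continuous_image[OF continuous_on_subset[OF continuous_on_cball] compact_cball])
    auto

lemma closure_image_ball_subset: "r \<le> 2 \<Longrightarrow> closure (e ` ball 0 r) \<subseteq> e ` cball 0 r"
  by (rule closure_minimal) (auto intro: compact_imp_closed compact_image_cball)

lemma chart_domain_image_ball: "chart_domain TYPE('n) (e ` ball 0 2)"
proof -
  \<comment> \<open>translate the model ball into the interior of the half-space\<close>
  define b :: 'n where "b = 3 *\<^sub>R hs_vec"
  have "homeomorphism (e ` ball 0 2) (ball 0 2) e' e"
    by (rule homeomorphism_of_subsets[OF homeomorphism_symD[OF homeomorphism_onto_image]])
      (auto simp: image_image ball_subset_cball[THEN subsetD] intro!: image_mono)
  moreover have "homeomorphism (ball 0 2) ((+) b ` ball 0 2) ((+) b) ((+) (- b))"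
    using homeomorphism_symD[OF homeomorphism_translation[of b "ball 0 2"]] .
  ultimately have hom: "homeomorphism (e ` ball 0 2) ((+) b ` ball 0 2) ((+) b \<circ> e') (e \<circ> (+) (- b))"
    by (rule homeomorphism_compose)
  have "(+) b ` ball 0 2 \<subseteq> half_space"
  proof clarify
    fix v :: 'n assume "v \<in> ball 0 2"
    then have "\<bar>v \<bullet> hs_vec\<bar> < 2"
      using Cauchy_Schwarz_ineq2[of v hs_vec] by simp
    then show "b + v \<in> half_space"
      unfolding half_space_def b_def by (simp add: inner_add_left)
  qed
  moreover have "open ((+) b ` ball 0 2)" by (rule open_translation) simp
  ultimately have "openin (top_of_set half_space) ((+) b ` ball 0 2)"
    by (metis Int_absorb1 openin_open_Int)
  moreover have "open (e ` ball 0 2)" by (rule open_image_ball) simp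
  ultimately have "chart (e ` ball 0 2) ((+) b \<circ> e')"
    unfolding chart_def homeomorphism_image1[OF hom] using hom by blast
  then show ?thesis unfolding chart_domain_def by blast
qed

lemma dense_in_homeo_image_ball:
  assumes "locally_approximating TYPE('n) G" "r < 2"
  shows "dense_in_homeo G (e ` ball 0 r)"
proof -
  have closure_sub: "closure (e ` ball 0 r) \<subseteq> e ` ball 0 2"
    using closure_image_ball_subset[of r] assms(2) by (force intro!: image_mono)
  have "open (e ` ball 0 r)" using assms(2) by (intro open_image_ball) simp
  moreover have "compact (closure (e ` ball 0 r))"
  proof -
    have "compact (e ` cball 0 r \<inter> closure (e ` ball 0 r))"
      using compact_image_cball[of r] assms(2) by (intro compact_Int_closed) auto
    then show ?thesis using closure_image_ball_subset[of r] assms(2) by (simp add: Int_absorb1)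
  qed
  moreover have "closure (e ` ball 0 r) \<inter> mbdry TYPE('n) = {}"
    using closure_sub image_ball_Int_mbdry[of 2] by auto
  moreover have "chart_domain TYPE('n) (e ` ball 0 2)" by (rule chart_domain_image_ball)
  ultimately show ?thesis
    using assms(1) closure_sub unfolding locally_approximating_def by blast
qed

definition pushforward :: "('n \<Rightarrow> 'n) \<Rightarrow> 'a \<Rightarrow> 'a" where
  "pushforward f x = (if x \<in> e ` cball 0 2 then e (f (e' x)) else x)"

lemma pushforward_apply [simp]: "v \<in> cball 0 2 \<Longrightarrow> pushforward f (e v) = e (f v)"
  unfolding pushforward_def by simp

lemma pushforward_fixed:
  assumes "\<And>v. v \<in> cball 0 2 \<Longrightarrow> r \<le> norm v \<Longrightarrow> f v = v" "x \<notin> e ` cball 0 r"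
  shows "pushforward f x = x"
proof (cases "x \<in> e ` cball 0 2")
  case True
  then obtain v where "v \<in> cball 0 2" "x = e v" by blast
  with assms show ?thesis by (cases "r \<le> norm v") auto
qed (simp add: pushforward_def)

lemma continuous_pushforward:
  assumes "continuous_on (cball 0 2) f" "f ` cball 0 2 \<subseteq> cball 0 2" "r < 2"
    and "\<And>v. v \<in> cball 0 2 \<Longrightarrow> r \<le> norm v \<Longrightarrow> f v = v"
  shows "continuous_on UNIV (pushforward f)"
proof -
  \<comment> \<open>glue along the open cover by e(ball 0 2) and the complement of e(cball 0 r)\<close>
  have "continuous_on (e ` ball 0 2) (e \<circ> f \<circ> e')"
  proof (intro continuous_on_compose)
    show "continuous_on (e ` ball 0 2) e'"
      by (rule continuous_on_subset[OF homeomorphism_cont2[OF homeomorphism_onto_image]])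
        (auto intro: image_mono)
    show "continuous_on (e' ` e ` ball 0 2) f"
      by (rule continuous_on_subset[OF assms(1)]) auto
    show "continuous_on (f ` e' ` e ` ball 0 2) e"
      by (rule continuous_on_subset[OF continuous_on_cball]) (use assms(2) in auto)
  qed
  then have "continuous_on (e ` ball 0 2) (pushforward f)"
    by (rule continuous_on_eq) auto
  moreover have "continuous_on (- e ` cball 0 r) (pushforward f)"
    by (rule continuous_on_eq[OF continuous_on_id]) (use pushforward_fixed assms(4) in fastforce)
  moreover have "open (e ` ball 0 2)" by (rule open_image_ball) simp
  moreover have "open (- e ` cball 0 r)"
    using assms(3) by (intro open_Compl compact_imp_closed compact_image_cball) simp
  ultimately have "continuous_on (e ` ball 0 2 \<union> - e ` cball 0 r) (pushforward f)"
    by (intro continuous_on_open_Un)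
  moreover have "e ` ball 0 2 \<union> - e ` cball 0 r = UNIV"
    using assms(3) by force
  ultimately show ?thesis by simp
qed

lemma pushforward_inverse:
  assumes f: "homeomorphism (cball 0 2) (cball 0 2) f f'"
  shows "pushforward f' (pushforward f x) = x"
proof (cases "x \<in> e ` cball 0 2")
  case True
  then obtain v where v: "v \<in> cball 0 2" "x = e v" by blast
  then have "f v \<in> cball 0 2" using homeomorphism_image1[OF f] by blast
  then show ?thesis using v homeomorphism_apply1[OF f] by simp
qed (simp add: pushforward_def)

lemma pushforward_in_rel_supp_homeos:
  assumes f: "homeomorphism (cball 0 2) (cball 0 2) f f'" and "r < 2"
    and fixed: "\<And>v. v \<in> cball 0 2 \<Longrightarrow> r \<le> norm v \<Longrightarrow> f v = v"
  shows "pushforward f \<in> rel_supp homeos (e ` cball 0 r)"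
proof -
  have fixed': "f' v = v" if "v \<in> cball 0 2" "r \<le> norm v" for v
    using fixed[OF that] homeomorphism_apply1[OF f that(1)] by simp
  have maps: "f ` cball 0 2 \<subseteq> cball 0 2" "f' ` cball 0 2 \<subseteq> cball 0 2"
    using homeomorphism_image1[OF f] homeomorphism_image2[OF f] by simp_all
  have inverse: "pushforward f' (pushforward f x) = x" "pushforward f (pushforward f' x) = x" for x
    using pushforward_inverse[OF f] pushforward_inverse[OF homeomorphism_symD[OF f]] by blast+
  have "homeomorphism UNIV UNIV (pushforward f) (pushforward f')"
    using continuous_pushforward[OF homeomorphism_cont1[OF f] maps(1) \<open>r < 2\<close> fixed]
      continuous_pushforward[OF homeomorphism_cont2[OF f] maps(2) \<open>r < 2\<close> fixed'] inverse
    by (intro homeomorphismI) auto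
  then show ?thesis
    unfolding rel_supp_def homeos_def using pushforward_fixed[OF fixed] by blast
qed

lemma exists_rel_supp_homeos_image_cball_subset:
  assumes "0 < a" "a < R" "R < 2" and W: "open W" "W \<inter> e ` ball 0 R \<noteq> {}"
  obtains H where "H \<in> rel_supp homeos (e ` ball 0 R)" "H ` e ` cball 0 a \<subseteq> W"
proof -
  obtain p where p: "norm p < R" "e p \<in> W" using W(2) by auto
  define r where "r = (max a (norm p) + R) / 2"
  have r: "a < r" "norm p < r" "r < R" "r \<le> 2" using assms p unfolding r_def by auto
  obtain f f' where f: "homeomorphism (cball (0::'n) 2) (cball 0 2) f f'"
    "\<And>v. v \<in> cball 0 2 \<Longrightarrow> r \<le> norm v \<Longrightarrow> f v = v" "f 0 = p"
    using homeomorphism_cball_moving_origin[OF r(2,4)] by metis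
  have "open (f -` (e -` W \<inter> ball 0 2) \<inter> ball 0 2)"
  proof -
    have "continuous_on (ball 0 2) f"
      using homeomorphism_cont1[OF f(1)] ball_subset_cball by (rule continuous_on_subset)
    moreover have "open (e -` W \<inter> ball 0 2)"
      using continuous_on_ball W(1) continuous_on_open_vimage[OF open_ball] by blast
    ultimately show ?thesis using continuous_on_open_vimage[OF open_ball] by blast
  qed
  moreover have "0 \<in> f -` (e -` W \<inter> ball 0 2) \<inter> ball 0 2" using f(3) p r assms by auto
  ultimately obtain \<delta> where \<delta>: "0 < \<delta>" "ball 0 \<delta> \<subseteq> f -` (e -` W \<inter> ball 0 2) \<inter> ball 0 2"
    using open_contains_ball by blast
  have \<epsilon>: "0 < min (\<delta> / 2) (a / 2)" "min (\<delta> / 2) (a / 2) < a"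
    using \<delta>(1) assms by auto
  obtain h h' where h: "homeomorphism (cball (0::'n) 2) (cball 0 2) h h'"
    "\<And>v. r \<le> norm v \<Longrightarrow> h v = v" "h ` cball 0 a \<subseteq> cball 0 (min (\<delta> / 2) (a / 2))"
    using homeomorphism_cball_shrinking[OF \<open>0 < a\<close> r(1,4) \<epsilon>] by metis
  \<comment> \<open>shrink e(cball 0 a) into a small ball around e 0, then move e 0 to the point e p of W\<close>
  let ?H = "pushforward (f \<circ> h)"
  have "?H \<in> rel_supp homeos (e ` cball 0 r)"
    using homeomorphism_compose[OF h(1) f(1)] r assms f(2) h(2)
    by (intro pushforward_in_rel_supp_homeos) auto
  also have "\<dots> \<subseteq> rel_supp homeos (e ` ball 0 R)"
    using r by (intro rel_supp_mono image_mono) auto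
  finally have "?H \<in> rel_supp homeos (e ` ball 0 R)" .
  moreover have "?H ` e ` cball 0 a \<subseteq> W"
  proof clarify
    fix v :: 'n assume "v \<in> cball 0 a"
    then have "h v \<in> cball 0 (min (\<delta> / 2) (a / 2))" using h(3) by blast
    then have "h v \<in> ball 0 \<delta>" using \<delta>(1) by simp
    then have "e (f (h v)) \<in> W" using \<delta>(2) by blast
    then show "?H (e v) \<in> W" using \<open>v \<in> cball 0 a\<close> r assms by simp
  qed
  ultimately show thesis by (rule that)
qed

lemma exists_rel_supp_image_cball_subset:
  assumes "locally_approximating TYPE('n) G"
    and "0 < a" "a < R" "R < 2" and "open W" "W \<inter> e ` ball 0 R \<noteq> {}"
  obtains g where "g \<in> rel_supp G (e ` ball 0 R)" "g ` e ` cball 0 a \<subseteq> W"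
proof -
  obtain H where H: "H \<in> rel_supp homeos (e ` ball 0 R)" "H ` e ` cball 0 a \<subseteq> W"
    by (rule exists_rel_supp_homeos_image_cball_subset[OF assms(2-6)])
  have "compact (e ` cball 0 a)" using assms by (intro compact_image_cball) simp
  with H show thesis
    using dense_in_homeo_approx[OF dense_in_homeo_image_ball[OF assms(1,4)]] assms(5) that by blast
qed

lemma exists_nontrivial_ext_supp:
  assumes "locally_approximating TYPE('n) G" "G \<subseteq> homeos" "0 < \<rho>" "\<rho> < 2"
  obtains g where "g \<in> rel_supp G (e ` ball 0 \<rho>)" "ext_supp g \<noteq> {}"
    "ext_supp g \<subseteq> e ` cball 0 \<rho>"
proof -
  let ?K = "e ` cball 0 (\<rho> / 2)"
  have "0 < \<rho> / 2" "\<rho> / 2 < \<rho>" using assms by auto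
  moreover have "open (- ?K)" using assms by (intro open_Compl compact_imp_closed compact_image_cball) simp
  moreover have "- ?K \<inter> e ` ball 0 \<rho> \<noteq> {}"
  proof -
    define v :: 'n where "v = (3 * \<rho> / 4) *\<^sub>R hs_vec"
    have v: "norm v = 3 * \<rho> / 4" using assms unfolding v_def by simp
    have "e v \<notin> ?K"
    proof
      assume "e v \<in> ?K"
      then obtain x where x: "norm x \<le> \<rho> / 2" "e v = e x" by auto
      have "v = x" using inj_on_cball x v assms by (simp add: inj_on_def)
      then show False using x v assms by simp
    qed
    moreover have "e v \<in> e ` ball 0 \<rho>" using v assms by simp
    ultimately show ?thesis by blast
  qed
  ultimately obtain g where g: "g \<in> rel_supp G (e ` ball 0 \<rho>)" "g ` ?K \<subseteq> - ?K"
    by (rule exists_rel_supp_image_cball_subset[OF assms(1) _ _ assms(4)])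
  \<comment> \<open>g pushes ?K off itself, so it moves the centre e 0\<close>
  have "e 0 \<in> ?K" using assms by simp
  moreover have "g (e 0) \<in> - ?K" using g(2) imageI[OF \<open>e 0 \<in> ?K\<close>] by (rule subsetD)
  ultimately have "g (e 0) \<noteq> e 0" by auto
  moreover have "g \<in> homeos" using g(1) assms(2) unfolding rel_supp_def by auto
  ultimately have "e 0 \<in> ext_supp g"
    using moved_points_subset_ext_supp[OF continuous_on_homeos] by auto
  moreover have "ext_supp g \<subseteq> e ` cball 0 \<rho>"
  proof (rule ext_supp_subset_closed)
    show "closed (e ` cball 0 \<rho>)" using assms by (intro compact_imp_closed compact_image_cball) simp
    show "g x = x" if "x \<notin> e ` cball 0 \<rho>" for x
    proof -
      have "x \<notin> e ` ball 0 \<rho>" using that by auto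
      then show ?thesis using g(1) unfolding rel_supp_def by auto
    qed
  qed
  ultimately show thesis using that g(1) by auto
qed

lemma exists_larger_image_cball_subset:
  assumes "open V" "e ` cball 0 a \<subseteq> V" "0 < a" "a < 2"
  obtains R where "a < R" "R < 2" "e ` cball 0 R \<subseteq> V"
proof -
  have "open (e -` V \<inter> ball 0 2)"
    using continuous_on_ball assms(1) continuous_on_open_vimage[OF open_ball] by blast
  moreover have "cball 0 a \<subseteq> e -` V \<inter> ball 0 2" using assms by auto
  ultimately obtain R where R: "a < R" "cball 0 R \<subseteq> e -` V \<inter> ball 0 2"
    using cball_subset_open_imp_larger_cball_subset assms(3) by metis
  show thesis
  proof (rule that[of "min R ((a + 2) / 2)"])
    show "a < min R ((a + 2) / 2)" "min R ((a + 2) / 2) < 2" using R(1) assms(4) by (auto simp: min_def)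
    show "e ` cball 0 (min R ((a + 2) / 2)) \<subseteq> V" using R(2) by fastforce
  qed
qed

end

lemma exists_collared_embedding_in_open:
  fixes W :: "'a::t2_space set"
  assumes manifold: "is_manifold TYPE('n::euclidean_space) TYPE('a)" and "open W" "x \<in> W"
  obtains e :: "'n::euclidean_space \<Rightarrow> 'a" and e' where "collared_embedding e e'" "e ` cball 0 2 \<subseteq> W"
proof -
  obtain C and \<phi> :: "'a \<Rightarrow> 'n" where "chart C \<phi>" "x \<in> C"
    using manifold unfolding is_manifold_def by blast
  then obtain \<psi> where hom: "homeomorphism C (\<phi> ` C) \<phi> \<psi>"
    and C: "openin (top_of_set half_space) (\<phi> ` C)"
    unfolding chart_def by blast
  have "openin (top_of_set (\<phi> ` C)) (\<phi> ` (C \<inter> W))"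
    using homeomorphism_imp_open_map[OF hom] openin_open_Int[OF \<open>open W\<close>] by blast
  then have "openin (top_of_set half_space) (\<phi> ` (C \<inter> W))" using C by (rule openin_trans)
  moreover have "\<phi> x \<in> \<phi> ` (C \<inter> W)" using \<open>x \<in> C\<close> \<open>x \<in> W\<close> by blast
  ultimately obtain c r where r: "0 < r" "cball c r \<subseteq> \<phi> ` (C \<inter> W)"
    by (rule openin_half_space_cball_subset)
  define e :: "'n \<Rightarrow> 'a" where "e v = \<psi> (c + (r / 2) *\<^sub>R v)" for v
  have affine_sub: "(\<lambda>v. c + (r / 2) *\<^sub>R v) ` cball 0 2 \<subseteq> \<phi> ` (C \<inter> W)"
  proof clarify
    fix v :: 'n assume "v \<in> cball 0 2"
    then have "norm ((r / 2) *\<^sub>R v) \<le> r" using r(1) by simp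
    then have "c + (r / 2) *\<^sub>R v \<in> cball c r" by (simp add: dist_norm)
    then show "c + (r / 2) *\<^sub>R v \<in> \<phi> ` (C \<inter> W)" using r(2) by blast
  qed
  have chart_e: "\<phi> (e v) = c + (r / 2) *\<^sub>R v" if "v \<in> cball 0 2" for v
  proof -
    have "c + (r / 2) *\<^sub>R v \<in> \<phi> ` C" using affine_sub that by blast
    then show ?thesis unfolding e_def by (rule homeomorphism_apply2[OF hom])
  qed
  have "continuous_on (cball 0 2) e" unfolding e_def
    by (rule continuous_on_compose2[OF homeomorphism_cont2[OF hom]])
      (use affine_sub in \<open>auto intro!: continuous_intros\<close>)
  moreover have "inj_on e (cball 0 2)"
  proof (rule inj_onI)
    fix v w :: 'n assume "v \<in> cball 0 2" "w \<in> cball 0 2" "e v = e w"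
    then have "c + (r / 2) *\<^sub>R v = c + (r / 2) *\<^sub>R w" using chart_e by metis
    then show "v = w" using r(1) by simp
  qed
  ultimately obtain e' where "homeomorphism (cball 0 2) (e ` cball 0 2) e e'"
    using homeomorphism_compact[OF compact_cball] by blast
  then have "collared_embedding e e'" using manifold by unfold_locales
  moreover have "e ` cball 0 2 \<subseteq> W"
  proof clarify
    fix v :: 'n assume "v \<in> cball 0 2"
    then obtain z where "z \<in> C \<inter> W" "c + (r / 2) *\<^sub>R v = \<phi> z" using affine_sub by blast
    then show "e v \<in> W" unfolding e_def using homeomorphism_apply1[OF hom] by simp
  qed
  ultimately show thesis by (rule that)
qed

lemma collared_ball_homeomorphic_image:
  fixes N :: "'n::euclidean_space itself" and g :: "'a::topological_space \<Rightarrow> 'a"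
  assumes "collared_ball N B" "homeomorphism UNIV UNIV g g'"
  shows "collared_ball N (g ` B)"
proof -
  obtain e :: "'n \<Rightarrow> 'a" and e' where e: "homeomorphism (cball 0 2) (e ` cball 0 2) e e'"
    and B: "B = e ` cball 0 1"
    using assms(1) unfolding collared_ball_def by blast
  have "homeomorphism (e ` cball 0 2) (g ` e ` cball 0 2) g g'"
    using assms(2) by (rule homeomorphism_of_subsets) auto
  with e have "homeomorphism (cball 0 2) (g ` e ` cball 0 2) (g \<circ> e) (e' \<circ> g')"
    by (rule homeomorphism_compose)
  then show ?thesis unfolding collared_ball_def B
    by (intro exI[of _ "g \<circ> e"] exI[of _ "e' \<circ> g'"]) (simp add: image_comp)
qed

section \<open>Compact containment\<close>

lemma open_D_of: "X \<in> D_of G \<Longrightarrow> open X"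
  unfolding D_of_def using open_ext_supp by blast

lemma compactly_contained_if_image_in_collared_ball:
  assumes "open V" "g \<in> rel_supp homeos V" "collared_ball N B" "B \<subseteq> V" "g ` U \<subseteq> B"
  shows "compactly_contained N U V"
proof -
  obtain g' where hom: "homeomorphism UNIV UNIV g g'"
    using assms(2) unfolding rel_supp_def homeos_def by blast
  have "collared_ball N (g' ` B)"
    using assms(3) homeomorphism_symD[OF hom] by (rule collared_ball_homeomorphic_image)
  moreover have "U \<subseteq> g' ` B"
  proof
    fix y assume "y \<in> U"
    then have "g y \<in> B" using assms(5) by blast
    moreover have "g' (g y) = y" using homeomorphism_apply1[OF hom] by simp
    ultimately show "y \<in> g' ` B" by (metis image_eqI)
  qed
  moreover have "g' ` B \<subseteq> V"
    \<comment> \<open>g fixes every point outside V, so its inverse cannot move a point of V out of V\<close>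
  proof
    fix y assume "y \<in> g' ` B"
    then have "g y \<in> V" using homeomorphism_apply2[OF hom] assms(4) by auto
    then show "y \<in> V" using assms(2) unfolding rel_supp_def by auto
  qed
  ultimately show ?thesis
    unfolding compactly_contained_def interior_open[OF \<open>open V\<close>] by blast
qed

lemma compactly_contained_imp_absorbing:
  fixes G :: "('a::t2_space \<Rightarrow> 'a) set"
  assumes manifold: "is_manifold TYPE('n::euclidean_space) TYPE('a)"
    and approximating: "locally_approximating TYPE('n) G" and "G \<subseteq> homeos"
    and "open V" and "compactly_contained TYPE('n) U V"
  shows "\<exists>W \<in> D_of G. W \<noteq> {} \<and> W \<subseteq> V \<and>
    (\<forall>W' \<in> D_of G. W' \<noteq> {} \<and> W' \<subseteq> W \<longrightarrow> (\<exists>g \<in> rel_supp G V. g ` U \<subseteq> W'))"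
proof -
  obtain e :: "'n \<Rightarrow> 'a" and e' where hom: "homeomorphism (cball 0 2) (e ` cball 0 2) e e'"
    and U: "U \<subseteq> e ` cball 0 1" and V: "e ` cball 0 1 \<subseteq> V"
    using assms(5) interior_open[OF \<open>open V\<close>] unfolding compactly_contained_def collared_ball_def
    by auto
  interpret collared_embedding e e' using manifold hom by unfold_locales
  have radii: "(0::real) < 1" "(1::real) < 2" by simp_all
  obtain R where R: "1 < R" "R < 2" "e ` cball 0 R \<subseteq> V"
    by (rule exists_larger_image_cball_subset[OF \<open>open V\<close> V radii])
  obtain g\<^sub>0 where "g\<^sub>0 \<in> rel_supp G (e ` ball 0 1)"
    and g\<^sub>0: "ext_supp g\<^sub>0 \<noteq> {}" "ext_supp g\<^sub>0 \<subseteq> e ` cball 0 1"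
    by (rule exists_nontrivial_ext_supp[OF approximating \<open>G \<subseteq> homeos\<close> radii])
  then have "ext_supp g\<^sub>0 \<in> D_of G" unfolding rel_supp_def D_of_def by blast
  have B_R: "e ` cball 0 1 \<subseteq> e ` ball 0 R" using R(1) by (intro image_mono) auto
  have R_V: "e ` ball 0 R \<subseteq> V" using R(3) ball_subset_cball by (meson image_mono order_trans)
  have "\<exists>g \<in> rel_supp G V. g ` U \<subseteq> W'"
    if W': "W' \<in> D_of G" "W' \<noteq> {}" "W' \<subseteq> ext_supp g\<^sub>0" for W'
  proof -
    have "W' \<subseteq> e ` ball 0 R" using W'(3) g\<^sub>0(2) B_R by (meson order_trans)
    then have "W' \<inter> e ` ball 0 R \<noteq> {}" using W'(2) by (simp add: Int_absorb2)
    then obtain g where g: "g \<in> rel_supp G (e ` ball 0 R)" "g ` e ` cball 0 1 \<subseteq> W'"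
      by (rule exists_rel_supp_image_cball_subset[OF approximating radii(1) R(1,2) open_D_of[OF W'(1)]])
    have "g \<in> rel_supp G V" using g(1) rel_supp_mono[OF R_V] by (rule subsetD[rotated])
    moreover have "g ` U \<subseteq> W'" using image_mono[OF U] g(2) by (rule order_trans)
    ultimately show ?thesis by blast
  qed
  moreover have "ext_supp g\<^sub>0 \<subseteq> V" using g\<^sub>0(2) V by (rule order_trans)
  ultimately show ?thesis using \<open>ext_supp g\<^sub>0 \<in> D_of G\<close> g\<^sub>0(1) by blast
qed

lemma absorbing_imp_compactly_contained:
  fixes G :: "('a::t2_space \<Rightarrow> 'a) set"
  assumes manifold: "is_manifold TYPE('n::euclidean_space) TYPE('a)"
    and approximating: "locally_approximating TYPE('n) G" and "G \<subseteq> homeos"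
    and "open V" and W: "W \<in> D_of G" "W \<noteq> {}" "W \<subseteq> V"
    and absorbing: "\<forall>W' \<in> D_of G. W' \<noteq> {} \<and> W' \<subseteq> W \<longrightarrow> (\<exists>g \<in> rel_supp G V. g ` U \<subseteq> W')"
  shows "compactly_contained TYPE('n) U V"
proof -
  obtain x where "x \<in> W" using W(2) by blast
  then obtain e :: "'n \<Rightarrow> 'a" and e' where "collared_embedding e e'" and eW: "e ` cball 0 2 \<subseteq> W"
    by (rule exists_collared_embedding_in_open[OF manifold open_D_of[OF W(1)]])
  interpret collared_embedding e e' by fact
  have radii: "(0::real) < 1" "(1::real) < 2" by simp_all
  obtain g\<^sub>0 where "g\<^sub>0 \<in> rel_supp G (e ` ball 0 1)"
    and g\<^sub>0: "ext_supp g\<^sub>0 \<noteq> {}" "ext_supp g\<^sub>0 \<subseteq> e ` cball 0 1"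
    by (rule exists_nontrivial_ext_supp[OF approximating \<open>G \<subseteq> homeos\<close> radii])
  then have "ext_supp g\<^sub>0 \<in> D_of G" unfolding rel_supp_def D_of_def by blast
  have "e ` cball 0 1 \<subseteq> e ` cball 0 2" by (intro image_mono) auto
  then have B_W: "e ` cball 0 1 \<subseteq> W" using eW by (rule order_trans)
  then have "ext_supp g\<^sub>0 \<subseteq> W" using g\<^sub>0(2) by (rule order_trans[rotated])
  then obtain g where g: "g \<in> rel_supp G V" "g ` U \<subseteq> ext_supp g\<^sub>0"
    using absorbing \<open>ext_supp g\<^sub>0 \<in> D_of G\<close> g\<^sub>0(1) by blast
  have "g \<in> rel_supp homeos V" using g(1) \<open>G \<subseteq> homeos\<close> unfolding rel_supp_def by blast
  moreover have "collared_ball TYPE('n) (e ` cball 0 1)"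
    unfolding collared_ball_def using homeomorphism_onto_image by blast
  moreover have "e ` cball 0 1 \<subseteq> V" using B_W W(3) by (rule order_trans)
  moreover have "g ` U \<subseteq> e ` cball 0 1" using g(2) g\<^sub>0(2) by (rule order_trans)
  ultimately show ?thesis by (rule compactly_contained_if_image_in_collared_ball[OF \<open>open V\<close>])
qed

theorem lemma2p2:
  fixes G :: "('a::t2_space \<Rightarrow> 'a) set" and U V :: "'a set"
  assumes "is_manifold TYPE('n::euclidean_space) TYPE('a)"
    and "compact (UNIV :: 'a set)" and "connected (UNIV :: 'a set)"
    and "is_subgroup_homeo G"
    and "locally_approximating TYPE('n) G"
    and "U \<in> D_of G" and "V \<in> D_of G"
  shows "compactly_contained TYPE('n) U V \<longleftrightarrow>
    (\<exists>W \<in> D_of G. W \<noteq> {} \<and> W \<subseteq> V \<and>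
       (\<forall>W' \<in> D_of G. W' \<noteq> {} \<and> W' \<subseteq> W \<longrightarrow> (\<exists>g \<in> rel_supp G V. g ` U \<subseteq> W')))"
proof -
  have "G \<subseteq> homeos" using assms(4) unfolding is_subgroup_homeo_def by blast
  moreover have "open V" using assms(7) by (rule open_D_of)
  ultimately show ?thesis
    using compactly_contained_imp_absorbing[OF assms(1,5)]
      absorbing_imp_compactly_contained[OF assms(1,5)] by (meson iffI)
qed

end
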